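(* Let $1\le r\le s\le t$ and let $u=ABCd$, $v=A'B'C'd'$ be vertices of $E3C(r,s,t)$ with $A=A'$, $B\ne B'$, $C\ne C'$ and $d\ne d'$. Then there exist $2r+2$ pairwise internally disjoint $u$–$v$ paths in $E3C(r,s,t)$, each of length at most $s+t+7$.
   Context: The exchanged 3-ary $n$-cube $E3C(r,s,t)$ ($r,s,t\ge1$, $n=r+s+t+1$): vertices are strings written $x=ABCd$ with $A\in\{0,1,2\}^r$, $B\in\{0,1,2\}^s$, $C\in\{0,1,2\}^t$, $d\in\{0,1,2\}$. Two distinct vertices $x=ABCd$, $y=A'B'C'd'$ are adjacent iff one of: (E0) $A=A',B=B',C=C'$ and $d\ne d'$; (E1) $d=d'=0$, $A=A'$, $B=B'$ and $C,C'$ differ in exactly one position; (E2) $d=d'=1$, $A=A'$, $C=C'$ and $B,B'$ differ in exactly one position; (E3) $d=d'=2$, $B=B'$, $C=C'$ and $A,A'$ differ in exactly one position. Paths are internally disjoint if they share no vertices other than their endpoints; length = number of edges. *)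

theory Defs
  imports Main
begin

type_synonym e3c_vertex = "nat list \<times> nat list \<times> nat list \<times> nat"

definition tern_strings :: "nat \<Rightarrow> nat list set" where
  "tern_strings k = {X. length X = k \<and> (\<forall>x\<in>set X. x < 3)}"

definition e3c_verts :: "nat \<Rightarrow> nat \<Rightarrow> nat \<Rightarrow> e3c_vertex set" where
  "e3c_verts r s t = {(A,B,C,d). A \<in> tern_strings r \<and> B \<in> tern_strings s
       \<and> C \<in> tern_strings t \<and> d < 3}"

definition differ_one :: "nat list \<Rightarrow> nat list \<Rightarrow> bool" where
  "differ_one X Y \<longleftrightarrow> length X = length Y \<and> card {i. i < length X \<and> X ! i \<noteq> Y ! i} = 1"

definition e3c_adj :: "nat \<Rightarrow> nat \<Rightarrow> nat \<Rightarrow> e3c_vertex \<Rightarrow> e3c_vertex \<Rightarrow> bool" where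
  "e3c_adj r s t x y \<longleftrightarrow> x \<in> e3c_verts r s t \<and> y \<in> e3c_verts r s t \<and> x \<noteq> y \<and>
     (case x of (A,B,C,d) \<Rightarrow> case y of (A',B',C',d') \<Rightarrow>
        (A = A' \<and> B = B' \<and> C = C' \<and> d \<noteq> d')
      \<or> (d = 0 \<and> d' = 0 \<and> A = A' \<and> B = B' \<and> differ_one C C')
      \<or> (d = 1 \<and> d' = 1 \<and> A = A' \<and> C = C' \<and> differ_one B B')
      \<or> (d = 2 \<and> d' = 2 \<and> B = B' \<and> C = C' \<and> differ_one A A'))"

text \<open>A path from u to v, given as its list of vertices (distinct, consecutive ones adjacent).
  Its length is the number of edges, i.e. length p - 1.\<close>
definition e3c_path :: "nat \<Rightarrow> nat \<Rightarrow> nat \<Rightarrow> e3c_vertex \<Rightarrow> e3c_vertex \<Rightarrow> e3c_vertex list \<Rightarrow> bool" where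
  "e3c_path r s t u v p \<longleftrightarrow> p \<noteq> [] \<and> hd p = u \<and> last p = v \<and> distinct p \<and>
     (\<forall>i. Suc i < length p \<longrightarrow> e3c_adj r s t (p ! i) (p ! Suc i))"

definition internally_disjoint :: "'v \<Rightarrow> 'v \<Rightarrow> 'v list \<Rightarrow> 'v list \<Rightarrow> bool" where
  "internally_disjoint u v p q \<longleftrightarrow> set p \<inter> set q \<subseteq> {u, v}"

end

(*
  Two symmetries of E3C reduce the claim to u = ABCd with d in {1,2} and v = AB'C'0:
  reversing paths swaps u and v, and exchanging B with C together with the layers 0 and 1
  maps E3C(r,s,t) onto E3C(r,t,s).  Within a layer a string is changed along the shortest
  route that corrects its differing positions from left to right.

  Two paths stay at A and change B and C in either order.  The other 2r paths leave A.
  One of them steps in layer 2 to a neighbour A_k of A, changes C, then B, and steps back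
  to A.  For d = 2 the remaining 2r - 1 paths step to the other neighbours A_k, change C into
  a neighbour T of C' off the route from C to C', change B, return to A in layer 2 and end
  with the edge from T to C' in layer 0.  For d = 1 they start instead at a neighbour B_k of
  B off the route from B to B' and end in the same way.  A string of length n has 2n
  neighbours, at most one of which lies on a shortest route starting or ending at it, so
  r <= s and r <= t supply enough B_k and T.  Distinct A_k, B_k and T keep the paths
  internally disjoint, and no path has more than s + t + 7 edges.
*)

theory Submission
  imports Defs
begin

definition hamming :: "'a list \<Rightarrow> 'a list \<Rightarrow> nat" where
  "hamming X Y = card {i. i < length X \<and> X ! i \<noteq> Y ! i}"

lemma hamming_Nil [simp]: "hamming [] Y = 0"
  by (simp add: hamming_def)

lemma hamming_Cons [simp]:
  "hamming (x # xs) (y # ys) = (if x = y then 0 else 1) + hamming xs ys"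
proof -
  have "{i. i < length (x # xs) \<and> (x # xs) ! i \<noteq> (y # ys) ! i}
      = (if x = y then {} else {0}) \<union> Suc ` {i. i < length xs \<and> xs ! i \<noteq> ys ! i}"
    by (auto simp: image_iff less_Suc_eq_0_disj)
  then show ?thesis
    by (simp add: hamming_def card_image)
qed

lemma hamming_self [simp]: "hamming X X = 0"
  by (simp add: hamming_def)

lemma hamming_commute: "length X = length Y \<Longrightarrow> hamming X Y = hamming Y X"
  by (induction X Y rule: list_induct2) auto

lemma differ_one_iff_hamming: "differ_one X Y \<longleftrightarrow> length X = length Y \<and> hamming X Y = 1"
  by (simp add: differ_one_def hamming_def)

lemma differ_one_commute: "differ_one X Y \<Longrightarrow> differ_one Y X"
  by (simp add: differ_one_iff_hamming hamming_commute)

lemma differ_one_neq: "differ_one X Y \<Longrightarrow> X \<noteq> Y"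
  by (auto simp: differ_one_iff_hamming)

lemma hamming_list_update:
  "j < length X \<Longrightarrow> hamming X (X[j := c]) = (if c = X ! j then 0 else 1)"
proof -
  assume "j < length X"
  then have "{i. i < length X \<and> X ! i \<noteq> X[j := c] ! i} = (if c = X ! j then {} else {j})"
    by (auto simp: nth_list_update)
  then show ?thesis
    by (simp add: hamming_def)
qed

fun route :: "'a list \<Rightarrow> 'a list \<Rightarrow> 'a list list" where
  "route (x # xs) (y # ys) =
     (if x = y then map (Cons x) (route xs ys)
      else (x # xs) # map (Cons y) (route xs ys))"
| "route xs ys = [xs]"

lemma route_not_Nil [simp]: "route X Y \<noteq> []"
  by (induction X Y rule: route.induct) auto

lemma hd_route [simp]: "hd (route X Y) = X"
  by (induction X Y rule: route.induct) (auto simp: hd_map)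

lemma last_route [simp]: "length X = length Y \<Longrightarrow> last (route X Y) = Y"
  by (induction X Y rule: list_induct2) (auto simp: last_map)

lemma ends_in_route: "X \<in> set (route X Y)" "length X = length Y \<Longrightarrow> Y \<in> set (route X Y)"
  by (metis hd_in_set hd_route route_not_Nil) (metis last_in_set last_route route_not_Nil)

lemma length_route: "length X = length Y \<Longrightarrow> length (route X Y) = Suc (hamming X Y)"
  by (induction X Y rule: list_induct2) auto

lemma length_route_le: "length (route X Y) \<le> Suc (length X)"
  by (induction X Y rule: route.induct) auto

lemma set_route:
  "length X = length Y \<Longrightarrow> Z \<in> set (route X Y) \<Longrightarrow>
     length Z = length X \<and> set Z \<subseteq> set X \<union> set Y"
proof (induction X Y arbitrary: Z rule: list_induct2)
  case (Cons x xs y ys)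
  then show ?case by (cases "x = y") fastforce+
qed simp

lemma route_in_tern_strings:
  "X \<in> tern_strings n \<Longrightarrow> Y \<in> tern_strings n \<Longrightarrow> Z \<in> set (route X Y) \<Longrightarrow> Z \<in> tern_strings n"
  using set_route[of X Y Z] unfolding tern_strings_def by fastforce

lemma hamming_route_nth:
  assumes "length X = length Y" "i < length (route X Y)"
  shows "hamming X (route X Y ! i) = i \<and> hamming (route X Y ! i) Y = hamming X Y - i"
  using assms
proof (induction X Y arbitrary: i rule: list_induct2)
  case (Cons x xs y ys)
  show ?case
  proof (cases "x = y")
    case True
    then show ?thesis using Cons by auto
  next
    case False
    show ?thesis
    proof (cases i)
      case (Suc j)
      then have "j < length (route xs ys)"
        using Cons.prems False by simp
      then show ?thesis
        using Cons.IH[of j] Suc False by (simp add: length_route Cons.hyps)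
    qed (use False in simp)
  qed
qed simp

lemma distinct_route:
  assumes "length X = length Y"
  shows "distinct (route X Y)"
  unfolding distinct_conv_nth
proof (intro allI impI)
  fix i j assume "i < length (route X Y)" "j < length (route X Y)" "i \<noteq> j"
  then show "route X Y ! i \<noteq> route X Y ! j"
    using hamming_route_nth[OF assms, of i] hamming_route_nth[OF assms, of j] by auto
qed

lemma successively_differ_one_route:
  "length X = length Y \<Longrightarrow> successively differ_one (route X Y)"
proof (induction X Y rule: list_induct2)
  case (Cons x xs y ys)
  have IH: "successively differ_one (map (Cons z) (route xs ys))" for z
    using Cons.IH by (simp add: successively_map differ_one_iff_hamming)
  have step: "differ_one (x # xs) (hd (map (Cons y) (route xs ys)))" if "x \<noteq> y"
    using that Cons.hyps by (simp add: hd_map differ_one_iff_hamming)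
  show ?case
  proof (cases "x = y")
    case True
    then show ?thesis using IH by simp
  next
    case False
    then show ?thesis using IH step by (simp add: successively_Cons)
  qed
qed simp

lemma route_eqI_hamming:
  assumes "length X = length Y" "Z \<in> set (route X Y)" "W \<in> set (route X Y)"
    and "hamming X Z = hamming X W \<or> hamming Z Y = hamming W Y"
  shows "Z = W"
proof -
  obtain i j where i: "i < length (route X Y)" "Z = route X Y ! i"
    and j: "j < length (route X Y)" "W = route X Y ! j"
    using assms(2,3) by (auto simp: in_set_conv_nth)
  have "hamming X Z = i" "hamming X W = j"
    "hamming Z Y = hamming X Y - i" "hamming W Y = hamming X Y - j"
    "i \<le> hamming X Y" "j \<le> hamming X Y"
    using hamming_route_nth[OF assms(1)] i j by (auto simp: length_route[OF assms(1)])
  then have "i = j"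
    using assms(4) by linarith
  then show ?thesis
    using i j by simp
qed

lemma card_route_hamming_1_le:
  assumes "length X = length Y"
  shows "card (set (route X Y) \<inter> {Z. hamming X Z = 1}) \<le> 1"
    and "card (set (route X Y) \<inter> {Z. hamming Z Y = 1}) \<le> 1"
  using route_eqI_hamming[OF assms] by (simp_all add: card_le_Suc0_iff_eq)

lemma length_filter_notin_ge:
  assumes "distinct xs" "card (set xs \<inter> S) \<le> 1"
  shows "length xs - 1 \<le> length (filter (\<lambda>z. z \<notin> S) xs)"
proof -
  have "length (filter (\<lambda>z. z \<in> S) xs) = card (set xs \<inter> S)"
    using assms(1) by (simp add: distinct_length_filter Int_commute)
  moreover have "length (filter (\<lambda>z. z \<notin> S) xs) + length (filter (\<lambda>z. z \<in> S) xs) = length xs"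
    using sum_length_filter_compl[of "\<lambda>z. z \<in> S" xs] by simp
  ultimately show ?thesis
    using assms(2) by linarith
qed

definition tern_nbr :: "nat list \<Rightarrow> nat \<Rightarrow> nat list" where
  "tern_nbr X k = X[k div 2 := (X ! (k div 2) + 1 + k mod 2) mod 3]"

definition tern_nbrs :: "nat list \<Rightarrow> nat list list" where
  "tern_nbrs X = map (tern_nbr X) [0..<2 * length X]"

lemma mod_3_shift_neq: "(x::nat) < 3 \<Longrightarrow> b < 2 \<Longrightarrow> (x + 1 + b) mod 3 \<noteq> x"
  by presburger

lemma mod_3_shift_eq_iff:
  "(b::nat) < 2 \<Longrightarrow> b' < 2 \<Longrightarrow> (x + 1 + b) mod 3 = (x + 1 + b') mod 3 \<longleftrightarrow> b = b'"
  by presburger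

lemma
  assumes "X \<in> tern_strings n" "k < 2 * n"
  shows tern_nbr_in_tern_strings: "tern_nbr X k \<in> tern_strings n"
    and hamming_tern_nbr: "hamming X (tern_nbr X k) = 1"
proof -
  have j: "k div 2 < length X" and x: "X ! (k div 2) < 3"
    using assms by (auto simp: tern_strings_def)
  then show "hamming X (tern_nbr X k) = 1"
    using mod_3_shift_neq[OF x, of "k mod 2"] by (simp add: hamming_list_update tern_nbr_def)
  have "set (tern_nbr X k) \<subseteq> insert ((X ! (k div 2) + 1 + k mod 2) mod 3) (set X)"
    by (simp add: tern_nbr_def set_update_subset_insert)
  then show "tern_nbr X k \<in> tern_strings n"
    using assms by (auto simp: tern_strings_def tern_nbr_def)
qed

lemma inj_on_tern_nbr:
  assumes "X \<in> tern_strings n"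
  shows "inj_on (tern_nbr X) {..<2 * n}"
proof
  fix k k' assume k: "k \<in> {..<2 * n}" "k' \<in> {..<2 * n}" and eq: "tern_nbr X k = tern_nbr X k'"
  have j: "k div 2 < length X" "k' div 2 < length X" and x: "X ! (k div 2) < 3"
    using assms k by (auto simp: tern_strings_def)
  have "k div 2 = k' div 2"
  proof (rule ccontr)
    assume "k div 2 \<noteq> k' div 2"
    then have "tern_nbr X k ! (k div 2) \<noteq> tern_nbr X k' ! (k div 2)"
      using j mod_3_shift_neq[OF x, of "k mod 2"] by (simp add: tern_nbr_def)
    then show False
      using eq by simp
  qed
  moreover have "k mod 2 = k' mod 2"
    using arg_cong[OF eq, of "\<lambda>Z. Z ! (k div 2)"] calculation j
      mod_3_shift_eq_iff[of "k mod 2" "k' mod 2"]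
    by (simp add: tern_nbr_def)
  ultimately show "k = k'"
    by (metis div_mult_mod_eq)
qed

lemma
  assumes "X \<in> tern_strings n"
  shows length_tern_nbrs: "length (tern_nbrs X) = 2 * n"
    and distinct_tern_nbrs: "distinct (tern_nbrs X)"
    and tern_nbrsD: "Z \<in> set (tern_nbrs X) \<Longrightarrow> Z \<in> tern_strings n \<and> hamming X Z = 1"
  using assms tern_nbr_in_tern_strings[OF assms] hamming_tern_nbr[OF assms]
    inj_on_tern_nbr[OF assms]
  by (auto simp: tern_nbrs_def tern_strings_def distinct_map atLeast0LessThan)

definition off_route_nbrs :: "nat list \<Rightarrow> nat list \<Rightarrow> nat list \<Rightarrow> nat list list" where
  "off_route_nbrs Z X Y = filter (\<lambda>W. W \<notin> set (route X Y)) (tern_nbrs Z)"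

lemma
  assumes "Z \<in> tern_strings n"
  shows distinct_off_route_nbrs: "distinct (off_route_nbrs Z X Y)"
    and off_route_nbrsD: "W \<in> set (off_route_nbrs Z X Y) \<Longrightarrow>
           W \<in> tern_strings n \<and> differ_one Z W \<and> W \<notin> set (route X Y)"
  using distinct_tern_nbrs[OF assms] tern_nbrsD[OF assms] assms
  by (auto simp: off_route_nbrs_def differ_one_iff_hamming tern_strings_def)

lemma length_off_route_nbrs:
  assumes "X \<in> tern_strings n" "Y \<in> tern_strings n"
  shows "2 * n - 1 \<le> length (off_route_nbrs X X Y)"
    and "2 * n - 1 \<le> length (off_route_nbrs Y X Y)"
proof -
  have len: "length X = length Y"
    using assms by (simp add: tern_strings_def)
  have "set (tern_nbrs X) \<inter> set (route X Y) \<subseteq> set (route X Y) \<inter> {Z. hamming X Z = 1}"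
    using tern_nbrsD[OF assms(1)] by blast
  from card_mono[OF _ this] have "card (set (tern_nbrs X) \<inter> set (route X Y)) \<le> 1"
    using card_route_hamming_1_le(1)[OF len] by simp
  then show "2 * n - 1 \<le> length (off_route_nbrs X X Y)"
    using length_filter_notin_ge[of "tern_nbrs X"]
      length_tern_nbrs[OF assms(1)] distinct_tern_nbrs[OF assms(1)]
    by (simp add: off_route_nbrs_def)
  have "hamming Z Y = 1" if "Z \<in> set (tern_nbrs Y)" for Z
    using tern_nbrsD[OF assms(2) that] assms(2) hamming_commute[of Z Y]
    by (simp add: tern_strings_def)
  then have "set (tern_nbrs Y) \<inter> set (route X Y) \<subseteq> set (route X Y) \<inter> {Z. hamming Z Y = 1}"
    by blast
  from card_mono[OF _ this] have "card (set (tern_nbrs Y) \<inter> set (route X Y)) \<le> 1"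
    using card_route_hamming_1_le(2)[OF len] by simp
  then show "2 * n - 1 \<le> length (off_route_nbrs Y X Y)"
    using length_filter_notin_ge[of "tern_nbrs Y"]
      length_tern_nbrs[OF assms(2)] distinct_tern_nbrs[OF assms(2)]
    by (simp add: off_route_nbrs_def)
qed

lemma e3c_path_iff_successively:
  "e3c_path r s t u v p \<longleftrightarrow>
     p \<noteq> [] \<and> hd p = u \<and> last p = v \<and> distinct p \<and> successively (e3c_adj r s t) p"
  by (simp add: e3c_path_def successively_conv_nth)

lemma e3c_adj_commute: "e3c_adj r s t x y \<Longrightarrow> e3c_adj r s t y x"
  unfolding e3c_adj_def by (cases x; cases y) (simp; metis differ_one_commute)

lemma e3c_adj_change_d:
  "(A, B, C, d) \<in> e3c_verts r s t \<Longrightarrow> d' < 3 \<Longrightarrow> d \<noteq> d' \<Longrightarrow>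
     e3c_adj r s t (A, B, C, d) (A, B, C, d')"
  by (auto simp: e3c_adj_def e3c_verts_def)

lemma e3c_adj_change_C:
  "A \<in> tern_strings r \<Longrightarrow> B \<in> tern_strings s \<Longrightarrow> X \<in> tern_strings t \<Longrightarrow> Y \<in> tern_strings t \<Longrightarrow>
     differ_one X Y \<Longrightarrow> e3c_adj r s t (A, B, X, 0) (A, B, Y, 0)"
  by (auto simp: e3c_adj_def e3c_verts_def dest: differ_one_neq)

lemma e3c_adj_change_B:
  "A \<in> tern_strings r \<Longrightarrow> C \<in> tern_strings t \<Longrightarrow> X \<in> tern_strings s \<Longrightarrow> Y \<in> tern_strings s \<Longrightarrow>
     differ_one X Y \<Longrightarrow> e3c_adj r s t (A, X, C, 1) (A, Y, C, 1)"
  by (auto simp: e3c_adj_def e3c_verts_def dest: differ_one_neq)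

lemma e3c_adj_change_A:
  "B \<in> tern_strings s \<Longrightarrow> C \<in> tern_strings t \<Longrightarrow> X \<in> tern_strings r \<Longrightarrow> Y \<in> tern_strings r \<Longrightarrow>
     differ_one X Y \<Longrightarrow> e3c_adj r s t (X, B, C, 2) (Y, B, C, 2)"
  by (auto simp: e3c_adj_def e3c_verts_def dest: differ_one_neq)

definition walk_C :: "nat list \<Rightarrow> nat list \<Rightarrow> nat list \<Rightarrow> nat list \<Rightarrow> e3c_vertex list" where
  "walk_C A B X Y = map (\<lambda>Z. (A, B, Z, 0)) (route X Y)"

definition walk_B :: "nat list \<Rightarrow> nat list \<Rightarrow> nat list \<Rightarrow> nat list \<Rightarrow> e3c_vertex list" where
  "walk_B A C X Y = map (\<lambda>Z. (A, Z, C, 1)) (route X Y)"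

lemma walk_C_simps [simp]:
  "walk_C A B X Y \<noteq> []" "hd (walk_C A B X Y) = (A, B, X, 0)"
  "length X = length Y \<Longrightarrow> last (walk_C A B X Y) = (A, B, Y, 0)"
  "length X = length Y \<Longrightarrow> distinct (walk_C A B X Y)"
  "length (walk_C A B X Y) = length (route X Y)"
  "v \<in> set (walk_C A B X Y) \<longleftrightarrow> (\<exists>Z\<in>set (route X Y). v = (A, B, Z, 0))"
  by (auto simp: walk_C_def hd_map last_map distinct_map inj_on_def distinct_route)

lemma walk_B_simps [simp]:
  "walk_B A C X Y \<noteq> []" "hd (walk_B A C X Y) = (A, X, C, 1)"
  "length X = length Y \<Longrightarrow> last (walk_B A C X Y) = (A, Y, C, 1)"
  "length X = length Y \<Longrightarrow> distinct (walk_B A C X Y)"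
  "length (walk_B A C X Y) = length (route X Y)"
  "v \<in> set (walk_B A C X Y) \<longleftrightarrow> (\<exists>Z\<in>set (route X Y). v = (A, Z, C, 1))"
  by (auto simp: walk_B_def hd_map last_map distinct_map inj_on_def distinct_route)

lemma successively_walk_C:
  assumes "A \<in> tern_strings r" "B \<in> tern_strings s" "X \<in> tern_strings t" "Y \<in> tern_strings t"
  shows "successively (e3c_adj r s t) (walk_C A B X Y)"
proof -
  have len: "length X = length Y"
    using assms by (simp add: tern_strings_def)
  show ?thesis
    unfolding walk_C_def successively_map
    using successively_differ_one_route[OF len]
    by (rule successively_mono)
      (use e3c_adj_change_C[OF assms(1,2)] route_in_tern_strings[OF assms(3,4)] in blast)
qed

lemma successively_walk_B:
  assumes "A \<in> tern_strings r" "C \<in> tern_strings t" "X \<in> tern_strings s" "Y \<in> tern_strings s"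
  shows "successively (e3c_adj r s t) (walk_B A C X Y)"
proof -
  have len: "length X = length Y"
    using assms by (simp add: tern_strings_def)
  show ?thesis
    unfolding walk_B_def successively_map
    using successively_differ_one_route[OF len]
    by (rule successively_mono)
      (use e3c_adj_change_B[OF assms(1,2)] route_in_tern_strings[OF assms(3,4)] in blast)
qed

definition pairwise_list :: "('a \<Rightarrow> 'a \<Rightarrow> bool) \<Rightarrow> 'a list \<Rightarrow> bool" where
  "pairwise_list R xs \<longleftrightarrow> (\<forall>i<length xs. \<forall>j<length xs. i \<noteq> j \<longrightarrow> R (xs ! i) (xs ! j))"

lemma pairwise_list_Nil [simp]: "pairwise_list R []"
  by (simp add: pairwise_list_def)

lemma pairwise_list_Cons:
  "symp R \<Longrightarrow> (\<forall>y\<in>set xs. R x y) \<Longrightarrow> pairwise_list R xs \<Longrightarrow> pairwise_list R (x # xs)"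
  unfolding pairwise_list_def by (auto simp: nth_Cons symp_def split: nat.splits)

lemma pairwise_list_append:
  "symp R \<Longrightarrow> (\<forall>x\<in>set xs. \<forall>y\<in>set ys. R x y) \<Longrightarrow> pairwise_list R xs \<Longrightarrow> pairwise_list R ys \<Longrightarrow>
     pairwise_list R (xs @ ys)"
  unfolding pairwise_list_def by (auto simp: nth_append symp_def)

lemma pairwise_list_map2:
  assumes "distinct xs" "distinct ys"
    and "\<And>x y x' y'. x \<in> set xs \<Longrightarrow> x' \<in> set xs \<Longrightarrow> y \<in> set ys \<Longrightarrow> y' \<in> set ys \<Longrightarrow>
           x \<noteq> x' \<Longrightarrow> y \<noteq> y' \<Longrightarrow> R (f x y) (f x' y')"
  shows "pairwise_list R (map2 f xs ys)"
  unfolding pairwise_list_def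
proof (intro allI impI)
  fix i j assume "i < length (map2 f xs ys)" "j < length (map2 f xs ys)" "i \<noteq> j"
  then show "R (map2 f xs ys ! i) (map2 f xs ys ! j)"
    using assms by (simp add: nth_eq_iff_index_eq)
qed

lemma symp_internally_disjoint: "symp (internally_disjoint u v)"
  by (auto simp: symp_def internally_disjoint_def)

definition disjoint_paths ::
    "nat \<Rightarrow> nat \<Rightarrow> nat \<Rightarrow> e3c_vertex \<Rightarrow> e3c_vertex \<Rightarrow> nat \<Rightarrow> e3c_vertex list list \<Rightarrow> bool" where
  "disjoint_paths r s t u v L P \<longleftrightarrow>
     (\<forall>p\<in>set P. e3c_path r s t u v p \<and> length p - 1 \<le> L) \<and>
     pairwise_list (internally_disjoint u v) P"

lemma disjoint_paths_rev:
  assumes "disjoint_paths r s t u v L P"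
  shows "disjoint_paths r s t v u L (map rev P)"
proof -
  have "e3c_path r s t v u (rev p)" if "e3c_path r s t u v p" for p
    using that unfolding e3c_path_iff_successively
    by (auto simp: hd_rev last_rev elim: successively_mono intro: e3c_adj_commute)
  moreover have "internally_disjoint v u (rev p) (rev q)" if "internally_disjoint u v p q" for p q
    using that by (auto simp: internally_disjoint_def)
  ultimately show ?thesis
    using assms by (auto simp: disjoint_paths_def pairwise_list_def)
qed

fun swap_BC :: "e3c_vertex \<Rightarrow> e3c_vertex" where
  "swap_BC (A, B, C, d) = (A, C, B, if d = 0 then 1 else if d = 1 then 0 else d)"

lemma inj_swap_BC: "inj swap_BC"
proof (rule injI)
  fix x y assume "swap_BC x = swap_BC y"
  then show "x = y"
    by (cases x; cases y) (auto split: if_splits)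
qed

lemma e3c_adj_swap_BC: "e3c_adj r s t x y \<Longrightarrow> e3c_adj r t s (swap_BC x) (swap_BC y)"
  unfolding e3c_adj_def e3c_verts_def by (cases x; cases y) (auto split: if_splits)

lemma disjoint_paths_swap_BC:
  assumes "disjoint_paths r s t u v L P"
  shows "disjoint_paths r t s (swap_BC u) (swap_BC v) L (map (map swap_BC) P)"
proof -
  have "e3c_path r t s (swap_BC u) (swap_BC v) (map swap_BC p)" if "e3c_path r s t u v p" for p
    using that unfolding e3c_path_iff_successively
    by (auto simp: hd_map last_map distinct_map inj_on_subset[OF inj_swap_BC] successively_map
        elim: successively_mono intro: e3c_adj_swap_BC)
  moreover have "internally_disjoint (swap_BC u) (swap_BC v) (map swap_BC p) (map swap_BC q)"
    if "internally_disjoint u v p q" for p q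
    using that by (auto simp: internally_disjoint_def image_Int[OF inj_swap_BC, symmetric])
  ultimately show ?thesis
    using assms by (auto simp: disjoint_paths_def pairwise_list_def)
qed

locale e3c_pair =
  fixes r s t :: nat and A B C B' C' :: "nat list"
  assumes r_pos: "1 \<le> r" and r_le_s: "r \<le> s" and r_le_t: "r \<le> t"
    and A: "A \<in> tern_strings r" and B: "B \<in> tern_strings s" and B': "B' \<in> tern_strings s"
    and C: "C \<in> tern_strings t" and C': "C' \<in> tern_strings t"
    and B_neq: "B \<noteq> B'" and C_neq: "C \<noteq> C'"
begin

definition B_nbrs :: "nat list list" where
  "B_nbrs = take (2 * r - 1) (off_route_nbrs B B B')"

definition C'_nbrs :: "nat list list" where
  "C'_nbrs = take (2 * r - 1) (off_route_nbrs C' C C')"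

lemma length_strings: "length A = r" "length B = s" "length B' = s" "length C = t" "length C' = t"
  using A B B' C C' by (auto simp: tern_strings_def)

lemma ends_in_routes:
  "B \<in> set (route B B')" "B' \<in> set (route B B')" "C \<in> set (route C C')" "C' \<in> set (route C C')"
  by (simp_all add: ends_in_route length_strings)

lemma A_nbrD:
  assumes "Ak \<in> set (tern_nbrs A)"
  shows "Ak \<in> tern_strings r \<and> differ_one A Ak \<and> differ_one Ak A \<and> Ak \<noteq> A"
proof -
  have "Ak \<in> tern_strings r" "differ_one A Ak"
    using tern_nbrsD[OF A assms] length_strings
    by (auto simp: differ_one_iff_hamming tern_strings_def)
  then show ?thesis
    using differ_one_commute differ_one_neq by blast
qed

lemma
  shows length_B_nbrs: "length B_nbrs = 2 * r - 1"
    and distinct_B_nbrs: "distinct B_nbrs"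
    and B_nbrD: "Bk \<in> set B_nbrs \<Longrightarrow>
      Bk \<in> tern_strings s \<and> differ_one B Bk \<and> Bk \<notin> set (route B B') \<and> Bk \<noteq> B \<and> Bk \<noteq> B'"
  using length_off_route_nbrs(1)[OF B B'] distinct_off_route_nbrs[OF B, of B B']
    off_route_nbrsD[OF B, where X = B and Y = B'] r_le_s ends_in_routes
  by (auto simp: B_nbrs_def dest: in_set_takeD)

lemma
  shows length_C'_nbrs: "length C'_nbrs = 2 * r - 1"
    and distinct_C'_nbrs: "distinct C'_nbrs"
    and C'_nbrD: "T \<in> set C'_nbrs \<Longrightarrow>
      T \<in> tern_strings t \<and> differ_one T C' \<and> T \<notin> set (route C C') \<and> T \<noteq> C \<and> T \<noteq> C'"
  using length_off_route_nbrs(2)[OF C C'] distinct_off_route_nbrs[OF C', of C C']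
    off_route_nbrsD[OF C', where X = C and Y = C'] r_le_t ends_in_routes
  by (auto simp: C'_nbrs_def dest: in_set_takeD differ_one_commute)

definition path_BC :: "e3c_vertex list" where
  "path_BC = walk_B A C B B' @ walk_C A B' C C'"

definition path_CB :: "e3c_vertex list" where
  "path_CB = walk_C A B C C' @ walk_B A C' B B' @ [(A, B', C', 0)]"

definition detour_A :: "nat list \<Rightarrow> e3c_vertex list" where
  "detour_A Ak = [(A, B, C, 2), (Ak, B, C, 2)] @ walk_C Ak B C C' @ walk_B Ak C' B B' @
     [(Ak, B', C', 2), (A, B', C', 2), (A, B', C', 0)]"

definition detour_AC :: "nat list \<Rightarrow> nat list \<Rightarrow> e3c_vertex list" where
  "detour_AC Ak T = [(A, B, C, 2), (Ak, B, C, 2)] @ walk_C Ak B C T @ walk_B Ak T B B' @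
     [(Ak, B', T, 2), (A, B', T, 2), (A, B', T, 0), (A, B', C', 0)]"

definition detour_BC :: "nat list \<Rightarrow> nat list \<Rightarrow> e3c_vertex list" where
  "detour_BC Bk T = [(A, B, C, 1), (A, Bk, C, 1)] @ walk_C A Bk C T @ walk_B A T Bk B' @
     [(A, B', T, 0), (A, B', C', 0)]"

lemmas vertex_facts =
  A B B' C C' length_strings B_neq C_neq B_neq[symmetric] C_neq[symmetric] ends_in_routes

lemma e3c_path_BC: "e3c_path r s t (A, B, C, 1) (A, B', C', 0) path_BC"
  unfolding e3c_path_iff_successively path_BC_def
  using vertex_facts successively_walk_B[of A r C t B s B'] successively_walk_C[of A r B' s C t C']
  by (auto simp: successively_append_iff e3c_verts_def intro!: e3c_adj_change_d)

lemma e3c_path_BC_from_2: "e3c_path r s t (A, B, C, 2) (A, B', C', 0) ((A, B, C, 2) # path_BC)"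
  using e3c_path_BC vertex_facts unfolding e3c_path_iff_successively path_BC_def
  by (auto simp: successively_Cons e3c_verts_def intro!: e3c_adj_change_d)

lemma e3c_path_CB:
  "d \<in> {1, 2} \<Longrightarrow> e3c_path r s t (A, B, C, d) (A, B', C', 0) ((A, B, C, d) # path_CB)"
  unfolding e3c_path_iff_successively path_CB_def
  using vertex_facts successively_walk_C[of A r B s C t C'] successively_walk_B[of A r C' t B s B']
  by (auto simp: successively_append_iff successively_Cons e3c_verts_def intro!: e3c_adj_change_d)

lemma e3c_path_detour_A:
  assumes "Ak \<in> set (tern_nbrs A)"
  shows "e3c_path r s t (A, B, C, 2) (A, B', C', 0) (detour_A Ak)"
  unfolding e3c_path_iff_successively detour_A_def
  using vertex_facts A_nbrD[OF assms]
    successively_walk_C[of Ak r B s C t C'] successively_walk_B[of Ak r C' t B s B']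
  by (auto simp: successively_append_iff successively_Cons e3c_verts_def
      intro!: e3c_adj_change_d e3c_adj_change_A)

lemma e3c_path_detour_A_from_1:
  assumes "Ak \<in> set (tern_nbrs A)"
  shows "e3c_path r s t (A, B, C, 1) (A, B', C', 0) ((A, B, C, 1) # detour_A Ak)"
  using e3c_path_detour_A[OF assms] vertex_facts A_nbrD[OF assms]
  unfolding e3c_path_iff_successively detour_A_def
  by (auto simp: successively_Cons e3c_verts_def intro!: e3c_adj_change_d)

lemma e3c_path_detour_AC:
  assumes "Ak \<in> set (tern_nbrs A)" "T \<in> set C'_nbrs"
  shows "e3c_path r s t (A, B, C, 2) (A, B', C', 0) (detour_AC Ak T)"
proof -
  have "length T = t"
    using C'_nbrD[OF assms(2)] by (simp add: tern_strings_def)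
  then show ?thesis
    unfolding e3c_path_iff_successively detour_AC_def
    using vertex_facts A_nbrD[OF assms(1)] C'_nbrD[OF assms(2)]
      successively_walk_C[of Ak r B s C t T] successively_walk_B[of Ak r T t B s B']
    by (auto simp: successively_append_iff successively_Cons e3c_verts_def
        intro!: e3c_adj_change_d e3c_adj_change_A e3c_adj_change_C)
qed

lemma e3c_path_detour_BC:
  assumes "Bk \<in> set B_nbrs" "T \<in> set C'_nbrs"
  shows "e3c_path r s t (A, B, C, 1) (A, B', C', 0) (detour_BC Bk T)"
proof -
  have "e3c_adj r s t (A, B, C, 1) (A, Bk, C, 1)"
    using e3c_adj_change_B vertex_facts B_nbrD[OF assms(1)] by blast
  moreover have "length T = t" "length Bk = s"
    using B_nbrD[OF assms(1)] C'_nbrD[OF assms(2)] by (simp_all add: tern_strings_def)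
  ultimately show ?thesis
    unfolding e3c_path_iff_successively detour_BC_def
    using vertex_facts B_nbrD[OF assms(1)] C'_nbrD[OF assms(2)]
      successively_walk_C[of A r Bk s C t T] successively_walk_B[of A r T t Bk s B']
    by (auto simp: successively_append_iff successively_Cons e3c_verts_def
        intro!: e3c_adj_change_d e3c_adj_change_C)
qed

lemma internally_disjoint_from_2:
  defines "u \<equiv> (A, B, C, 2)" and "v \<equiv> (A, B', C', 0)"
  shows "internally_disjoint u v (u # path_BC) (u # path_CB)"
    and "Ak \<noteq> A \<Longrightarrow> internally_disjoint u v (u # path_BC) (detour_A Ak)"
    and "Ak \<noteq> A \<Longrightarrow> internally_disjoint u v (u # path_CB) (detour_A Ak)"
    and "Ak \<noteq> A \<Longrightarrow> T \<notin> set (route C C') \<Longrightarrow>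
           internally_disjoint u v (u # path_BC) (detour_AC Ak T)"
    and "Ak \<noteq> A \<Longrightarrow> internally_disjoint u v (u # path_CB) (detour_AC Ak T)"
    and "Ak \<noteq> A \<Longrightarrow> Aj \<noteq> A \<Longrightarrow> Ak \<noteq> Aj \<Longrightarrow> T \<notin> set (route C C') \<Longrightarrow>
           internally_disjoint u v (detour_A Ak) (detour_AC Aj T)"
    and "Ak \<noteq> A \<Longrightarrow> Aj \<noteq> A \<Longrightarrow> Ak \<noteq> Aj \<Longrightarrow> T \<noteq> T' \<Longrightarrow>
           internally_disjoint u v (detour_AC Ak T) (detour_AC Aj T')"
  using B_neq C_neq ends_in_routes
  unfolding u_def v_def internally_disjoint_def path_BC_def path_CB_def detour_A_def detour_AC_def
  by auto

lemma internally_disjoint_from_1: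
  defines "u \<equiv> (A, B, C, 1)" and "v \<equiv> (A, B', C', 0)"
  shows "internally_disjoint u v path_BC (u # path_CB)"
    and "Ak \<noteq> A \<Longrightarrow> internally_disjoint u v path_BC (u # detour_A Ak)"
    and "Ak \<noteq> A \<Longrightarrow> internally_disjoint u v (u # path_CB) (u # detour_A Ak)"
    and "Bk \<notin> set (route B B') \<Longrightarrow> T \<notin> set (route C C') \<Longrightarrow>
           internally_disjoint u v path_BC (detour_BC Bk T)"
    and "Bk \<notin> set (route B B') \<Longrightarrow> T \<notin> set (route C C') \<Longrightarrow>
           internally_disjoint u v (u # path_CB) (detour_BC Bk T)"
    and "Ak \<noteq> A \<Longrightarrow> internally_disjoint u v (u # detour_A Ak) (detour_BC Bk T)"
    and "Bk \<notin> set (route B B') \<Longrightarrow> Bj \<notin> set (route B B') \<Longrightarrow> Bk \<noteq> Bj \<Longrightarrow>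
         T \<notin> set (route C C') \<Longrightarrow> T' \<notin> set (route C C') \<Longrightarrow> T \<noteq> T' \<Longrightarrow>
           internally_disjoint u v (detour_BC Bk T) (detour_BC Bj T')"
  using B_neq C_neq ends_in_routes
  unfolding u_def v_def internally_disjoint_def path_BC_def path_CB_def detour_A_def detour_BC_def
  by auto

lemma length_paths:
  "length path_BC \<le> s + t + 2" "length path_CB \<le> s + t + 3"
  "length (detour_A Ak) \<le> s + t + 7" "length (detour_AC Ak T) \<le> s + t + 8"
  "length Bk = s \<Longrightarrow> length (detour_BC Bk T) \<le> s + t + 6"
  using length_strings length_route_le[of B B'] length_route_le[of C C'] length_route_le[of C T]
    length_route_le[of Bk B']
  by (simp_all add: path_BC_def path_CB_def detour_A_def detour_AC_def detour_BC_def)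

definition paths_from_2 :: "e3c_vertex list list" where
  "paths_from_2 = [(A, B, C, 2) # path_BC, (A, B, C, 2) # path_CB, detour_A (hd (tern_nbrs A))]
     @ map2 detour_AC (tl (tern_nbrs A)) C'_nbrs"

lemma disjoint_paths_from_2:
  "length paths_from_2 = 2 * r + 2 \<and>
     disjoint_paths r s t (A, B, C, 2) (A, B', C', 0) (s + t + 7) paths_from_2"
proof -
  obtain A0 As where A0: "tern_nbrs A = A0 # As"
    using length_tern_nbrs[OF A] r_pos by (cases "tern_nbrs A") auto
  have "length paths_from_2 = 2 * r + 2"
    using A0 length_tern_nbrs[OF A] length_C'_nbrs r_pos by (simp add: paths_from_2_def)
  moreover have "e3c_path r s t (A, B, C, 2) (A, B', C', 0) p \<and> length p - 1 \<le> s + t + 7"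
    if p: "p \<in> set paths_from_2" for p
  proof -
    consider "p = (A, B, C, 2) # path_BC" | "p = (A, B, C, 2) # path_CB" | "p = detour_A A0"
      | Ak T where "Ak \<in> set (tern_nbrs A)" "T \<in> set C'_nbrs" "p = detour_AC Ak T"
      using p A0 by (auto simp: paths_from_2_def elim: in_set_zipE)
    then show ?thesis
    proof cases
      case (4 Ak T)
      then show ?thesis
        using e3c_path_detour_AC length_paths(4)[of Ak T] by simp
    qed (use A0 e3c_path_BC_from_2 e3c_path_CB[of 2] e3c_path_detour_A length_paths(1,2)
          length_paths(3)[of A0] in auto)
  qed
  moreover have "pairwise_list (internally_disjoint (A, B, C, 2) (A, B', C', 0)) paths_from_2"
    unfolding paths_from_2_def A0 list.sel
    using distinct_tern_nbrs[OF A] A_nbrD distinct_C'_nbrs C'_nbrD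
    by (intro pairwise_list_append pairwise_list_Cons pairwise_list_map2
        symp_internally_disjoint ballI)
      (auto simp: A0 elim!: in_set_zipE intro: internally_disjoint_from_2)
  ultimately show ?thesis
    by (simp add: disjoint_paths_def)
qed

definition paths_from_1 :: "e3c_vertex list list" where
  "paths_from_1 = [path_BC, (A, B, C, 1) # path_CB, (A, B, C, 1) # detour_A (hd (tern_nbrs A))]
     @ map2 detour_BC B_nbrs C'_nbrs"

lemma disjoint_paths_from_1:
  "length paths_from_1 = 2 * r + 2 \<and>
     disjoint_paths r s t (A, B, C, 1) (A, B', C', 0) (s + t + 7) paths_from_1"
proof -
  have A0: "hd (tern_nbrs A) \<in> set (tern_nbrs A)"
    using length_tern_nbrs[OF A] r_pos by (intro hd_in_set) auto
  have "length paths_from_1 = 2 * r + 2"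
    using length_B_nbrs length_C'_nbrs r_pos by (simp add: paths_from_1_def)
  moreover have "e3c_path r s t (A, B, C, 1) (A, B', C', 0) p \<and> length p - 1 \<le> s + t + 7"
    if p: "p \<in> set paths_from_1" for p
  proof -
    consider "p = path_BC" | "p = (A, B, C, 1) # path_CB"
      | "p = (A, B, C, 1) # detour_A (hd (tern_nbrs A))"
      | Bk T where "Bk \<in> set B_nbrs" "T \<in> set C'_nbrs" "p = detour_BC Bk T"
      using p by (auto simp: paths_from_1_def elim: in_set_zipE)
    then show ?thesis
    proof cases
      case (4 Bk T)
      then show ?thesis
        using e3c_path_detour_BC B_nbrD length_paths(5)[of Bk T] by (simp add: tern_strings_def)
    qed (use A0 e3c_path_BC e3c_path_CB[of 1] e3c_path_detour_A_from_1 length_paths(1,2)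
          length_paths(3)[of "hd (tern_nbrs A)"] in auto)
  qed
  moreover have "pairwise_list (internally_disjoint (A, B, C, 1) (A, B', C', 0)) paths_from_1"
    unfolding paths_from_1_def
    using A0 A_nbrD distinct_B_nbrs B_nbrD distinct_C'_nbrs C'_nbrD
    by (intro pairwise_list_append pairwise_list_Cons pairwise_list_map2
        symp_internally_disjoint ballI)
      (auto elim!: in_set_zipE intro: internally_disjoint_from_1[unfolded One_nat_def])
  ultimately show ?thesis
    by (simp add: disjoint_paths_def)
qed

lemma exists_paths_to_layer_0_or_1:
  assumes "d' \<in> {0, 1}" "d < 3" "d \<noteq> d'"
  shows "\<exists>P. length P = 2 * r + 2 \<and>
    disjoint_paths r s t (A, B, C, d) (A, B', C', d') (s + t + 7) P"
proof -
  interpret swapped: e3c_pair r t s A C B C' B'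
    using r_pos r_le_s r_le_t A B B' C C' B_neq C_neq by unfold_locales
  consider "d' = 0" "d \<in> {1, 2}" | "d' = 1" "d = 0" | "d' = 1" "d = 2"
    using assms by fastforce
  then show ?thesis
  proof cases
    case 1
    then show ?thesis
      using disjoint_paths_from_1 disjoint_paths_from_2 by auto
  next
    case 2
    with swapped.disjoint_paths_from_1 show ?thesis
      by (intro exI[of _ "map (map swap_BC) swapped.paths_from_1"])
        (auto dest: disjoint_paths_swap_BC simp: add.commute)
  next
    case 3
    with swapped.disjoint_paths_from_2 show ?thesis
      by (intro exI[of _ "map (map swap_BC) swapped.paths_from_2"])
        (auto dest: disjoint_paths_swap_BC simp: add.commute)
  qed
qed

end

lemma exists_disjoint_paths:
  assumes "1 \<le> r" "r \<le> s" "r \<le> t"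
    and "(A, B, C, d) \<in> e3c_verts r s t" "(A, B', C', d') \<in> e3c_verts r s t"
    and "B \<noteq> B'" "C \<noteq> C'" "d \<noteq> d'"
  shows "\<exists>P. length P = 2 * r + 2 \<and> disjoint_paths r s t (A, B, C, d) (A, B', C', d') (s + t + 7) P"
proof (cases "d' \<in> {0, 1}")
  case True
  interpret e3c_pair r s t A B C B' C'
    using assms by unfold_locales (auto simp: e3c_verts_def)
  show ?thesis
    using exists_paths_to_layer_0_or_1 True assms(4,8) by (simp add: e3c_verts_def)
next
  case False
  interpret reversed: e3c_pair r s t A B' C' B C
    using assms by unfold_locales (auto simp: e3c_verts_def)
  have "d \<in> {0, 1}"
    using False assms(4,5,8) by (auto simp: e3c_verts_def)
  then obtain P where "length P = 2 * r + 2"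
    and "disjoint_paths r s t (A, B', C', d') (A, B, C, d) (s + t + 7) P"
    using reversed.exists_paths_to_layer_0_or_1[of d d'] assms(5,8) by (auto simp: e3c_verts_def)
  then show ?thesis
    using disjoint_paths_rev by (intro exI[of _ "map rev P"]) simp
qed

theorem lemma17:
  fixes r s t :: nat and A A' B B' C C' :: "nat list" and d d' :: nat
  assumes "1 \<le> r" and "r \<le> s" and "s \<le> t"
    and "(A, B, C, d) \<in> e3c_verts r s t" and "(A', B', C', d') \<in> e3c_verts r s t"
    and "A = A'" and "B \<noteq> B'" and "C \<noteq> C'" and "d \<noteq> d'"
  shows "\<exists>P :: e3c_vertex list list. length P = 2 * r + 2 \<and>
     (\<forall>i < length P. e3c_path r s t (A, B, C, d) (A', B', C', d') (P ! i)
                     \<and> length (P ! i) - 1 \<le> s + t + 7) \<and>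
     (\<forall>i < length P. \<forall>j < length P. i \<noteq> j \<longrightarrow>
        internally_disjoint (A, B, C, d) (A', B', C', d') (P ! i) (P ! j))"
proof -
  obtain P where "length P = 2 * r + 2"
    and "disjoint_paths r s t (A, B, C, d) (A, B', C', d') (s + t + 7) P"
    using exists_disjoint_paths[of r s t A B C d B' C' d'] assms by auto
  then show ?thesis
    unfolding disjoint_paths_def pairwise_list_def \<open>A = A'\<close>[symmetric]
    by (intro exI[of _ P]) auto
qed

end
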